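(* Suppose that a topological group $G$ has exactly $m$ elements of order $p$, for some integer $m\ge 1$ and some prime number $p$. Let $k\ge 1$ be an integer. Then a space $X$ has precisely $k$ connected components if and only if $C_p(X,G)$ has exactly $(m+1)^{k}-1$ elements of order $p$.
   Context: All spaces are Tychonoff and non-empty; topological groups are Hausdorff. $C_p(X,G)$ is the group of continuous maps $X\to G$ with pointwise operations and the topology of pointwise convergence. The order of an element $g$ is the least $n\ge1$ with $g^n=e$. *)

theory Defs
  imports "HOL-Analysis.Analysis" "HOL-Algebra.Multiplicative_Group"
begin

definition topological_group :: "('g, 'b) monoid_scheme \<Rightarrow> 'g topology \<Rightarrow> bool" where
  "topological_group G T \<longleftrightarrow>
     group G \<and> topspace T = carrier G \<and>
     continuous_map (prod_topology T T) T (\<lambda>(x, y). x \<otimes>\<^bsub>G\<^esub> y) \<and>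
     continuous_map T T (\<lambda>x. inv\<^bsub>G\<^esub> x) \<and>
     Hausdorff_space T"

definition tychonoff_space :: "'a topology \<Rightarrow> bool" where
  "tychonoff_space X \<longleftrightarrow> completely_regular_space X \<and> Hausdorff_space X"

text \<open>The group underlying C_p(X,G): continuous maps X -> G (taken extensional on the
carrier of X, so that distinct elements are distinct functions on topspace X), with
pointwise operations. The topology of pointwise convergence is irrelevant for the
group-theoretic statement.\<close>
definition Cp_group :: "'a topology \<Rightarrow> ('g, 'b) monoid_scheme \<Rightarrow> 'g topology \<Rightarrow> ('a \<Rightarrow> 'g) monoid" where
  "Cp_group X G T =
     \<lparr> carrier = {f. continuous_map X T f \<and> f \<in> extensional (topspace X)},
       mult = (\<lambda>f g. \<lambda>x\<in>topspace X. f x \<otimes>\<^bsub>G\<^esub> g x),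
       one = (\<lambda>x\<in>topspace X. \<one>\<^bsub>G\<^esub>) \<rparr>"

definition elements_of_order :: "('g, 'b) monoid_scheme \<Rightarrow> nat \<Rightarrow> 'g set" where
  "elements_of_order G n = {g \<in> carrier G. group.ord G g = n}"

end

theory Submission
  imports Defs
begin

(* For prime p, a map f in C_p(X,G) has order p iff f is not the identity and all its values lie
   in the set R of solutions of g^p = 1, which has m + 1 points and is therefore a discrete subspace
   of the Hausdorff group G. So the elements of order p are the continuous maps from X to the
   finite discrete space R other than the constant map 1. Such maps are constant on connected components, and when
   there are finitely many components (each then clopen) they correspond to arbitrary functions
   from the components to R: there are (m + 1)^k of them. Conversely, if there are only finitely
   many, then, as R has two points, X has only finitely many clopen sets, hence finitely many
   quasi-components, and these coincide with the components. *)

definition discrete_valued_maps :: "'a topology \<Rightarrow> 'b set \<Rightarrow> ('a \<Rightarrow> 'b) set" where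
  "discrete_valued_maps X S =
     {f. continuous_map X (discrete_topology S) f \<and> f \<in> extensional (topspace X)}"

lemma continuous_map_discrete_topology_iff:
  "continuous_map X (discrete_topology S) f \<longleftrightarrow>
     f \<in> topspace X \<rightarrow> S \<and> (\<forall>U \<subseteq> S. openin X {x \<in> topspace X. f x \<in> U})"
  by (auto simp: continuous_map_def)

lemma continuous_map_discrete_topology_component_eq:
  assumes f: "continuous_map X (discrete_topology S) f" and xy: "connected_component_of X x y"
  shows "f x = f y"
proof -
  have "connectedin (discrete_topology S) (f ` connected_component_of_set X x)"
    by (rule connectedin_continuous_map_image[OF f connectedin_connected_component_of])
  then obtain a where "f ` connected_component_of_set X x \<subseteq> {a}"
    by (auto simp: connectedin_discrete_topology)
  moreover have "connected_component_of X x x"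
    using xy by (simp add: connected_component_of_refl connected_component_in_topspace)
  ultimately show ?thesis
    using xy by auto
qed

lemma continuous_map_discrete_topology_component_function:
  assumes fin: "finite (connected_components_of X)" and g: "g \<in> connected_components_of X \<rightarrow> S"
  shows "continuous_map X (discrete_topology S) (\<lambda>x. g (connected_component_of_set X x))"
  unfolding continuous_map_discrete_topology_iff
proof (intro conjI allI impI)
  show "(\<lambda>x. g (connected_component_of_set X x)) \<in> topspace X \<rightarrow> S"
    using g by (auto simp: connected_component_in_connected_components_of)
  fix U
  have "{x \<in> topspace X. g (connected_component_of_set X x) \<in> U} =
        \<Union>{C \<in> connected_components_of X. g C \<in> U}"
    by (auto simp: connected_components_of_def connected_component_of_refl connected_component_of_equiv)
  moreover have "openin X (\<Union>{C \<in> connected_components_of X. g C \<in> U})"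
    using open_in_finite_connected_components[OF fin] by auto
  ultimately show "openin X {x \<in> topspace X. g (connected_component_of_set X x) \<in> U}"
    by simp
qed

lemma bij_betw_discrete_valued_maps:
  assumes fin: "finite (connected_components_of X)"
  shows "bij_betw (\<lambda>g. \<lambda>x\<in>topspace X. g (connected_component_of_set X x))
           (connected_components_of X \<rightarrow>\<^sub>E S) (discrete_valued_maps X S)"
proof -
  let ?lift = "\<lambda>g. \<lambda>x\<in>topspace X. g (connected_component_of_set X x)"
  let ?rep = "\<lambda>C. SOME x. x \<in> C"
  let ?restr = "\<lambda>f. \<lambda>C\<in>connected_components_of X. f (?rep C)"
  have rep: "?rep C \<in> C" if "C \<in> connected_components_of X" for C
    using nonempty_connected_components_of[OF that] by (simp add: some_in_eq)
  have component_rep: "connected_component_of_set X (?rep C) = C"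
    if "C \<in> connected_components_of X" for C
    using that rep[OF that]
    by (auto simp: connected_components_of_def connected_component_of_equiv)
  show ?thesis
  proof (rule bij_betw_byWitness[where f' = ?restr])
    show "\<forall>g \<in> connected_components_of X \<rightarrow>\<^sub>E S. ?restr (?lift g) = g"
      using rep component_rep connected_components_of_subset
      by (force simp: PiE_def extensional_def)
    show "\<forall>f \<in> discrete_valued_maps X S. ?lift (?restr f) = f"
    proof
      fix f assume f: "f \<in> discrete_valued_maps X S"
      have "f (?rep (connected_component_of_set X x)) = f x" if "x \<in> topspace X" for x
        using that rep[of "connected_component_of_set X x"] f
          continuous_map_discrete_topology_component_eq[of X S f x]
        by (simp add: discrete_valued_maps_def connected_component_in_connected_components_of
            connected_component_of_sym)
      then show "?lift (?restr f) = f"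
        using f by (auto simp: discrete_valued_maps_def extensional_def
            connected_component_in_connected_components_of)
    qed
    show "?lift ` (connected_components_of X \<rightarrow>\<^sub>E S) \<subseteq> discrete_valued_maps X S"
    proof clarify
      fix g assume "g \<in> connected_components_of X \<rightarrow>\<^sub>E S"
      then have "continuous_map X (discrete_topology S) (\<lambda>x. g (connected_component_of_set X x))"
        using fin by (intro continuous_map_discrete_topology_component_function) auto
      then show "?lift g \<in> discrete_valued_maps X S"
        unfolding discrete_valued_maps_def by (auto elim: continuous_map_eq)
    qed
    show "?restr ` discrete_valued_maps X S \<subseteq> connected_components_of X \<rightarrow>\<^sub>E S"
      using rep connected_components_of_subset
      by (force simp: discrete_valued_maps_def continuous_map_discrete_topology_iff)
  qed
qed

lemma
  assumes "finite (connected_components_of X)" "finite S"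
  shows finite_discrete_valued_maps: "finite (discrete_valued_maps X S)"
    and card_discrete_valued_maps:
      "card (discrete_valued_maps X S) = card S ^ card (connected_components_of X)"
proof -
  have bij: "bij_betw (\<lambda>g. \<lambda>x\<in>topspace X. g (connected_component_of_set X x))
      (connected_components_of X \<rightarrow>\<^sub>E S) (discrete_valued_maps X S)"
    using assms(1) by (rule bij_betw_discrete_valued_maps)
  show "finite (discrete_valued_maps X S)"
    using bij_betw_finite[OF bij] assms by (simp add: finite_PiE)
  show "card (discrete_valued_maps X S) = card S ^ card (connected_components_of X)"
    using bij_betw_same_card[OF bij] assms(1) by (simp add: card_PiE)
qed

lemma two_valued_map_in_discrete_valued_maps:
  assumes "closedin X U" "openin X U" "a \<in> S" "b \<in> S"
  shows "(\<lambda>x\<in>topspace X. if x \<in> U then a else b) \<in> discrete_valued_maps X S"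
  unfolding discrete_valued_maps_def continuous_map_discrete_topology_iff
proof (intro CollectI conjI allI impI)
  fix V
  have "{x \<in> topspace X. (\<lambda>x\<in>topspace X. if x \<in> U then a else b) x \<in> V} =
        (if a \<in> V then U else {}) \<union> (if b \<in> V then topspace X - U else {})"
    using openin_subset[OF assms(2)] by auto
  then show "openin X {x \<in> topspace X. (\<lambda>x\<in>topspace X. if x \<in> U then a else b) x \<in> V}"
    using assms(1,2) by (auto simp: openin_diff)
qed (use assms in auto)

lemma finite_clopens_if_finite_discrete_valued_maps:
  assumes fin: "finite (discrete_valued_maps X S)" and "a \<in> S" "b \<in> S" "a \<noteq> b"
  shows "finite {U. closedin X U \<and> openin X U}"
proof -
  let ?ind = "\<lambda>U. \<lambda>x\<in>topspace X. if x \<in> U then a else b"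
  have "?ind ` {U. closedin X U \<and> openin X U} \<subseteq> discrete_valued_maps X S"
    using two_valued_map_in_discrete_valued_maps[OF _ _ \<open>a \<in> S\<close> \<open>b \<in> S\<close>] by blast
  moreover have "inj_on ?ind {U. closedin X U \<and> openin X U}"
  proof (rule inj_onI)
    fix U V assume U: "U \<in> {U. closedin X U \<and> openin X U}" and V: "V \<in> {U. closedin X U \<and> openin X U}"
      and eq: "?ind U = ?ind V"
    have "x \<in> U \<longleftrightarrow> x \<in> V" if "x \<in> topspace X" for x
      using fun_cong[OF eq, of x] that \<open>a \<noteq> b\<close> by (simp split: if_splits)
    then show "U = V"
      using U V openin_subset by blast
  qed
  ultimately show ?thesis
    using finite_imageD finite_subset fin by blast
qed

(* A quasi-component is the intersection of the clopen sets containing any of its points. *)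
lemma finite_connected_components_of_finite_clopens:
  assumes "finite {U. closedin X U \<and> openin X U}"
  shows "finite (connected_components_of X)"
proof -
  have "quasi_components_of X \<subseteq> Inter ` Pow {U. closedin X U \<and> openin X U}"
    by (auto simp: quasi_components_of_def quasi_component_of_set)
  then have "finite (quasi_components_of X)"
    using assms by (meson finite_Pow_iff finite_imageI finite_subset)
  then show ?thesis
    by (metis quasi_eq_connected_components_of)
qed

lemma finite_discrete_valued_maps_iff:
  assumes "finite S" "card S \<ge> 2"
  shows "finite (discrete_valued_maps X S) \<longleftrightarrow> finite (connected_components_of X)"
proof
  obtain a b where "a \<in> S" "b \<in> S" "a \<noteq> b"
    using assms card_le_Suc0_iff_eq[of S] by auto
  then show "finite (discrete_valued_maps X S) \<Longrightarrow> finite (connected_components_of X)"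
    by (metis finite_clopens_if_finite_discrete_valued_maps finite_connected_components_of_finite_clopens)
qed (use assms finite_discrete_valued_maps in auto)

lemma (in group) ord_eq_prime_iff:
  assumes "prime p" "x \<in> carrier G"
  shows "ord x = p \<longleftrightarrow> x [^] p = \<one> \<and> x \<noteq> \<one>"
proof
  assume "ord x = p"
  then show "x [^] p = \<one> \<and> x \<noteq> \<one>"
    using assms ord_eq_1 pow_ord_eq_1 by (metis not_prime_1)
next
  assume "x [^] p = \<one> \<and> x \<noteq> \<one>"
  then have "ord x dvd p" "ord x \<noteq> 1"
    using assms(2) pow_eq_id ord_eq_1 by auto
  then show "ord x = p"
    using assms(1) prime_nat_iff by blast
qed

lemma (in group) one_notin_elements_of_order: "n \<noteq> 1 \<Longrightarrow> \<one> \<notin> elements_of_order G n"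
  by (simp add: elements_of_order_def)

lemma (in group) insert_one_elements_of_order_prime:
  "prime p \<Longrightarrow> insert \<one> (elements_of_order G p) = {g \<in> carrier G. g [^] p = \<one>}"
  using ord_eq_prime_iff by (auto simp: elements_of_order_def)

lemma pow_Cp_group:
  "f \<in> extensional (topspace X) \<Longrightarrow>
     f [^]\<^bsub>Cp_group X G T\<^esub> (n::nat) = (\<lambda>x\<in>topspace X. f x [^]\<^bsub>G\<^esub> n)"
  by (induct n) (auto simp: Cp_group_def fun_eq_iff)

context
  fixes G :: "('g, 'b) monoid_scheme" and T :: "'g topology"
  assumes tg: "topological_group G T"
begin

interpretation G: group G
  using tg by (simp add: topological_group_def)

lemma topspace_topological_group: "topspace T = carrier G"
  using tg by (simp add: topological_group_def)

lemma continuous_map_pointwise_mult: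
  assumes "continuous_map X T f" "continuous_map X T g"
  shows "continuous_map X T (\<lambda>x. f x \<otimes>\<^bsub>G\<^esub> g x)"
proof -
  have "continuous_map (prod_topology T T) T (\<lambda>(x, y). x \<otimes>\<^bsub>G\<^esub> y)"
    using tg by (simp add: topological_group_def)
  from continuous_map_compose[OF continuous_map_pairedI[OF assms] this]
  show ?thesis by (simp add: o_def)
qed

lemma continuous_map_pointwise_inv:
  assumes "continuous_map X T f"
  shows "continuous_map X T (\<lambda>x. inv\<^bsub>G\<^esub> f x)"
proof -
  have "continuous_map T T (\<lambda>x. inv\<^bsub>G\<^esub> x)"
    using tg by (simp add: topological_group_def)
  from continuous_map_compose[OF assms this]
  show ?thesis by (simp add: o_def)
qed

lemma restrict_in_carrier_Cp_group:
  "continuous_map X T f \<Longrightarrow> restrict f (topspace X) \<in> carrier (Cp_group X G T)"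
  by (simp add: Cp_group_def continuous_map_eq[of X T f])

lemma Cp_group_apply_in_carrier:
  "f \<in> carrier (Cp_group X G T) \<Longrightarrow> x \<in> topspace X \<Longrightarrow> f x \<in> carrier G"
  using topspace_topological_group by (auto simp: Cp_group_def continuous_map_def)

lemma group_Cp_group: "group (Cp_group X G T)"
proof (rule groupI)
  fix f g h
  assume f: "f \<in> carrier (Cp_group X G T)" and g: "g \<in> carrier (Cp_group X G T)"
    and h: "h \<in> carrier (Cp_group X G T)"
  have "continuous_map X T (\<lambda>x. f x \<otimes>\<^bsub>G\<^esub> g x)"
    using f g by (simp add: Cp_group_def continuous_map_pointwise_mult)
  then have "(\<lambda>x\<in>topspace X. f x \<otimes>\<^bsub>G\<^esub> g x) \<in> carrier (Cp_group X G T)"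
    by (rule restrict_in_carrier_Cp_group)
  then show "f \<otimes>\<^bsub>Cp_group X G T\<^esub> g \<in> carrier (Cp_group X G T)"
    by (simp add: Cp_group_def)
  show "f \<otimes>\<^bsub>Cp_group X G T\<^esub> g \<otimes>\<^bsub>Cp_group X G T\<^esub> h =
        f \<otimes>\<^bsub>Cp_group X G T\<^esub> (g \<otimes>\<^bsub>Cp_group X G T\<^esub> h)"
    using Cp_group_apply_in_carrier[OF f] Cp_group_apply_in_carrier[OF g]
      Cp_group_apply_in_carrier[OF h]
    by (auto simp: Cp_group_def G.m_assoc intro!: restrict_ext)
next
  show "\<one>\<^bsub>Cp_group X G T\<^esub> \<in> carrier (Cp_group X G T)"
    using restrict_in_carrier_Cp_group[of X "\<lambda>x. \<one>\<^bsub>G\<^esub>"] topspace_topological_group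
    by (simp add: Cp_group_def)
next
  fix f assume f: "f \<in> carrier (Cp_group X G T)"
  then show "\<one>\<^bsub>Cp_group X G T\<^esub> \<otimes>\<^bsub>Cp_group X G T\<^esub> f = f"
    using Cp_group_apply_in_carrier[OF f]
    by (auto simp: Cp_group_def extensional_def fun_eq_iff)
  let ?g = "\<lambda>x\<in>topspace X. inv\<^bsub>G\<^esub> f x"
  have "?g \<in> carrier (Cp_group X G T)"
    using f by (intro restrict_in_carrier_Cp_group continuous_map_pointwise_inv)
      (simp add: Cp_group_def)
  moreover have "?g \<otimes>\<^bsub>Cp_group X G T\<^esub> f = \<one>\<^bsub>Cp_group X G T\<^esub>"
    using Cp_group_apply_in_carrier[OF f] by (auto simp: Cp_group_def intro!: restrict_ext)
  ultimately show "\<exists>g\<in>carrier (Cp_group X G T). g \<otimes>\<^bsub>Cp_group X G T\<^esub> f = \<one>\<^bsub>Cp_group X G T\<^esub>"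
    by blast
qed

lemma elements_of_order_Cp_group_prime:
  assumes "prime p" and fin: "finite {g \<in> carrier G. g [^]\<^bsub>G\<^esub> p = \<one>\<^bsub>G\<^esub>}"
  shows "elements_of_order (Cp_group X G T) p =
           discrete_valued_maps X {g \<in> carrier G. g [^]\<^bsub>G\<^esub> p = \<one>\<^bsub>G\<^esub>} - {\<one>\<^bsub>Cp_group X G T\<^esub>}"
proof -
  define S where "S = {g \<in> carrier G. g [^]\<^bsub>G\<^esub> p = \<one>\<^bsub>G\<^esub>}"
  interpret Cp: group "Cp_group X G T"
    by (rule group_Cp_group)
  have discrete: "subtopology T S = discrete_topology S" \<comment> \<open>finite sets in a T1 space are discrete\<close>
    using tg fin topspace_topological_group
    by (intro subtopology_eq_discrete_topology_finite)
      (auto simp: S_def topological_group_def Hausdorff_imp_t1_space)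
  have "continuous_map X (discrete_topology S) f \<longleftrightarrow>
          continuous_map X T f \<and> (\<forall>x\<in>topspace X. f x \<in> S)" for f
    unfolding discrete[symmetric] continuous_map_in_subtopology by blast
  then have maps: "discrete_valued_maps X S =
                     {f \<in> carrier (Cp_group X G T). \<forall>x\<in>topspace X. f x \<in> S}"
    by (auto simp: discrete_valued_maps_def Cp_group_def)
  have "f [^]\<^bsub>Cp_group X G T\<^esub> p = \<one>\<^bsub>Cp_group X G T\<^esub> \<longleftrightarrow> (\<forall>x\<in>topspace X. f x \<in> S)"
    if f: "f \<in> carrier (Cp_group X G T)" for f
  proof -
    have "f \<in> extensional (topspace X)"
      using f by (simp add: Cp_group_def)
    then have "f [^]\<^bsub>Cp_group X G T\<^esub> p = (\<lambda>x\<in>topspace X. f x [^]\<^bsub>G\<^esub> p)"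
      by (rule pow_Cp_group)
    moreover have "\<one>\<^bsub>Cp_group X G T\<^esub> = (\<lambda>x\<in>topspace X. \<one>\<^bsub>G\<^esub>)"
      by (simp add: Cp_group_def)
    ultimately show ?thesis
      using Cp_group_apply_in_carrier[OF f] by (auto simp: S_def fun_eq_iff)
  qed
  then show ?thesis
    unfolding S_def[symmetric] maps elements_of_order_def
    using Cp.ord_eq_prime_iff[OF \<open>prime p\<close>] by auto
qed

end

lemma power_minus_one_inject:
  fixes a :: nat
  assumes "1 < a"
  shows "a ^ m - 1 = a ^ n - 1 \<longleftrightarrow> m = n"
proof -
  have "0 < a ^ m" "0 < a ^ n"
    using assms by simp_all
  then have "a ^ m - 1 = a ^ n - 1 \<longleftrightarrow> a ^ m = a ^ n"
    by linarith
  then show ?thesis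
    using assms power_inject_exp by simp
qed

theorem proposition8p4:
  fixes G :: "('g, 'b) monoid_scheme" and T :: "'g topology"
    and X :: "'a topology" and m k p :: nat
  assumes "topological_group G T"
    and "m \<ge> 1" and "prime p"
    and "finite (elements_of_order G p)" and "card (elements_of_order G p) = m"
    and "k \<ge> 1"
    and "tychonoff_space X" and "topspace X \<noteq> {}"
  shows "(finite (connected_components_of X) \<and> card (connected_components_of X) = k)
     \<longleftrightarrow> (finite (elements_of_order (Cp_group X G T) p) \<and>
          card (elements_of_order (Cp_group X G T) p) = (m + 1) ^ k - 1)"
proof -
  interpret G: group G
    using assms(1) by (simp add: topological_group_def)
  define S where "S = {g \<in> carrier G. g [^]\<^bsub>G\<^esub> p = \<one>\<^bsub>G\<^esub>}"
  have "S = insert \<one>\<^bsub>G\<^esub> (elements_of_order G p)" "\<one>\<^bsub>G\<^esub> \<notin> elements_of_order G p"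
    using G.insert_one_elements_of_order_prime[OF assms(3)]
      G.one_notin_elements_of_order prime_gt_1_nat[OF assms(3)]
    by (auto simp: S_def)
  then have "finite S" "card S = m + 1" "\<one>\<^bsub>G\<^esub> \<in> S"
    using assms(4,5) by simp_all
  have E: "elements_of_order (Cp_group X G T) p = discrete_valued_maps X S - {\<one>\<^bsub>Cp_group X G T\<^esub>}"
    using elements_of_order_Cp_group_prime[OF assms(1,3)] \<open>finite S\<close> by (simp add: S_def)
  have "\<one>\<^bsub>Cp_group X G T\<^esub> \<in> discrete_valued_maps X S"
    using two_valued_map_in_discrete_valued_maps[of X "{}" "\<one>\<^bsub>G\<^esub>" S "\<one>\<^bsub>G\<^esub>"] \<open>\<one>\<^bsub>G\<^esub> \<in> S\<close>
    by (simp add: Cp_group_def)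
  then have card_E: "card (elements_of_order (Cp_group X G T) p) =
      (m + 1) ^ card (connected_components_of X) - 1" if "finite (connected_components_of X)"
    using that \<open>finite S\<close> \<open>card S = m + 1\<close> by (simp add: E card_discrete_valued_maps)
  have "finite (elements_of_order (Cp_group X G T) p) \<longleftrightarrow> finite (connected_components_of X)"
    using finite_discrete_valued_maps_iff[OF \<open>finite S\<close>] \<open>card S = m + 1\<close> assms(2) by (simp add: E)
  moreover have "(m + 1) ^ n - 1 = (m + 1) ^ k - 1 \<longleftrightarrow> n = k" for n
    using power_minus_one_inject[of "m + 1" n k] assms(2) by simp
  ultimately show ?thesis
    using card_E by metis
qed

end
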